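(* Let $\mathcal{L}$ be a set of graphs of sort $\emptyset$, let $\tau\subseteq\mathbb{S}$ be finite and let $G_1,G_2$ be graphs of sort included in $\tau$. Then $G_1\cong^{\mathbf{G}}_{\mathcal{L}}G_2$ iff $G_1\cong^{\mathbf{G}^\tau}_{\mathcal{L}}G_2$.
   Context: Graphs over a countably infinite set $\mathbb{S}$ of source labels and a set $\mathbb{A}$ of edge labels: isomorphism classes of finite $\mathbb{A}$-labelled hypergraphs with an injective map from a finite sort into the vertices (sources). The HR algebra $\mathbf{G}$: sorts the finite subsets of $\mathbb{S}$; operations $\mathbf{0}_\sigma$, $\mathbf{a}_{(s_1,\ldots)}$, $\mathsf{restrict}_\sigma$ (forget source labels outside $\sigma$, keep vertices), $\mathsf{rename}_\alpha$ ($\alpha$ finite permutation of $\mathbb{S}$, relabelling sources), $\parallel$ (disjoint union fusing equally-labelled sources). $\mathbf{G}^\tau$: subalgebra with sorts the subsets of $\tau$, universe the graphs of sort $\subseteq\tau$, and operations $\mathbf{0}_\sigma$ ($\sigma\subseteq\tau$), $\mathbf{a}_{(s_1,\ldots)}$ ($s_i\in\tau$), $\mathsf{restrict}_\sigma$ ($\sigma\subseteq\tau$), $\mathsf{rename}_\alpha$ ($\alpha$ fixing all elements outside $\tau$), $\parallel$. The syntactic congruence $\cong^{\mathbf{A}}_{\mathcal{L}}$ in an algebra $\mathbf{A}$ relates elements $a,b$ of $\mathbf{A}$ iff they have the same sort and for every first-order term $t(x,y_1,\ldots,y_k)$ over the signature of $\mathbf{A}$ and all elements $c_i$ of $\mathbf{A}$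 of matching sorts, $t^{\mathbf{A}}(a,\bar c)\in\mathcal{L}\iff t^{\mathbf{A}}(b,\bar c)\in\mathcal{L}$. *)

theory Defs
  imports Main "HOL-Library.Countable"
begin

text \<open>A graph (in the paper: an
isomorphism class) is represented by a raw graph with vertices and hyperedges
drawn from nat; languages are required to be closed under isomorphism.\<close>

record ('s, 'a) sgraph =
  verts :: "nat set"
  edges :: "nat set"
  lab   :: "nat \<Rightarrow> 'a"
  att   :: "nat \<Rightarrow> nat list"
  src   :: "'s \<Rightarrow> nat option"

definition gsort :: "('s, 'a) sgraph \<Rightarrow> 's set" where
  "gsort G = dom (src G)"

definition wf_graph :: "('s, 'a) sgraph \<Rightarrow> bool" where
  "wf_graph G \<longleftrightarrow> finite (verts G) \<and> finite (edges G)
     \<and> (\<forall>e\<in>edges G. set (att G e) \<subseteq> verts G)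
     \<and> finite (dom (src G)) \<and> ran (src G) \<subseteq> verts G
     \<and> inj_on (src G) (dom (src G))"

definition graph_iso :: "('s, 'a) sgraph \<Rightarrow> ('s, 'a) sgraph \<Rightarrow> bool" where
  "graph_iso G H \<longleftrightarrow> (\<exists>f g. bij_betw f (verts G) (verts H) \<and> bij_betw g (edges G) (edges H)
     \<and> (\<forall>e\<in>edges G. lab H (g e) = lab G e \<and> att H (g e) = map f (att G e))
     \<and> (\<forall>s. src H s = map_option f (src G s)))"

definition iso_closed :: "('s, 'a) sgraph set \<Rightarrow> bool" where
  "iso_closed L \<longleftrightarrow> (\<forall>G H. G \<in> L \<and> graph_iso G H \<longrightarrow> H \<in> L)"

definition g_zero :: "'s::countable set \<Rightarrow> ('s, 'a) sgraph" where
  "g_zero \<sigma> = \<lparr>verts = to_nat ` \<sigma>, edges = {}, lab = (\<lambda>_. undefined), att = (\<lambda>_. []),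
     src = (\<lambda>s. if s \<in> \<sigma> then Some (to_nat s) else None)\<rparr>"

definition g_edge :: "'a \<Rightarrow> 's::countable list \<Rightarrow> ('s, 'a) sgraph" where
  "g_edge a ss = \<lparr>verts = to_nat ` set ss, edges = {0}, lab = (\<lambda>_. a),
     att = (\<lambda>_. map to_nat ss),
     src = (\<lambda>s. if s \<in> set ss then Some (to_nat s) else None)\<rparr>"

definition g_restrict :: "'s set \<Rightarrow> ('s, 'a) sgraph \<Rightarrow> ('s, 'a) sgraph" where
  "g_restrict \<sigma> G = G\<lparr>src := src G |` \<sigma>\<rparr>"

definition g_rename :: "('s \<Rightarrow> 's) \<Rightarrow> ('s, 'a) sgraph \<Rightarrow> ('s, 'a) sgraph" where
  "g_rename \<alpha> G = G\<lparr>src := src G \<circ> inv \<alpha>\<rparr>"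

text \<open>Parallel composition: disjoint union (G on even, H on odd numbers), where a source
vertex of H whose label is also a source label of G is fused with that source of G.\<close>

definition par_vmap :: "('s, 'a) sgraph \<Rightarrow> ('s, 'a) sgraph \<Rightarrow> nat \<Rightarrow> nat" where
  "par_vmap G H v =
     (if \<exists>s. s \<in> dom (src G) \<and> src H s = Some v
      then 2 * the (src G (SOME s. s \<in> dom (src G) \<and> src H s = Some v))
      else 2 * v + 1)"

definition g_par :: "('s, 'a) sgraph \<Rightarrow> ('s, 'a) sgraph \<Rightarrow> ('s, 'a) sgraph" where
  "g_par G H = \<lparr>verts = (\<lambda>v. 2 * v) ` verts G \<union> par_vmap G H ` verts H,
     edges = (\<lambda>e. 2 * e) ` edges G \<union> (\<lambda>e. 2 * e + 1) ` edges H,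
     lab = (\<lambda>e. if even e then lab G (e div 2) else lab H (e div 2)),
     att = (\<lambda>e. if even e then map (\<lambda>v. 2 * v) (att G (e div 2))
               else map (par_vmap G H) (att H (e div 2))),
     src = (\<lambda>s. case src G s of Some v \<Rightarrow> Some (2 * v)
               | None \<Rightarrow> map_option (par_vmap G H) (src H s))\<rparr>"

definition finite_perm :: "('s \<Rightarrow> 's) \<Rightarrow> bool" where
  "finite_perm \<alpha> \<longleftrightarrow> bij \<alpha> \<and> finite {s. \<alpha> s \<noteq> s}"

datatype ('s, 'a) trm =
    TVar nat
  | TZero "'s set"
  | TEdge 'a "'s list"
  | TRestrict "'s set" "('s, 'a) trm"
  | TRename "'s \<Rightarrow> 's" "('s, 'a) trm"
  | TPar "('s, 'a) trm" "('s, 'a) trm"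

text \<open>Terms over the signature of \<open>G^\<tau>\<close>; the signature of \<open>G\<close> is the case \<open>\<tau> = UNIV\<close>.\<close>

fun trm_ok :: "'s set \<Rightarrow> ('s, 'a) trm \<Rightarrow> bool" where
  "trm_ok \<tau> (TVar i) = True"
| "trm_ok \<tau> (TZero \<sigma>) = (finite \<sigma> \<and> \<sigma> \<subseteq> \<tau>)"
| "trm_ok \<tau> (TEdge a ss) = (distinct ss \<and> set ss \<subseteq> \<tau>)"
| "trm_ok \<tau> (TRestrict \<sigma> t) = (finite \<sigma> \<and> \<sigma> \<subseteq> \<tau> \<and> trm_ok \<tau> t)"
| "trm_ok \<tau> (TRename \<alpha> t) = (finite_perm \<alpha> \<and> (\<forall>s. s \<notin> \<tau> \<longrightarrow> \<alpha> s = s) \<and> trm_ok \<tau> t)"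
| "trm_ok \<tau> (TPar t u) = (trm_ok \<tau> t \<and> trm_ok \<tau> u)"

fun eval :: "(nat \<Rightarrow> ('s::countable, 'a) sgraph) \<Rightarrow> ('s, 'a) trm \<Rightarrow> ('s, 'a) sgraph" where
  "eval \<rho> (TVar i) = \<rho> i"
| "eval \<rho> (TZero \<sigma>) = g_zero \<sigma>"
| "eval \<rho> (TEdge a ss) = g_edge a ss"
| "eval \<rho> (TRestrict \<sigma> t) = g_restrict \<sigma> (eval \<rho> t)"
| "eval \<rho> (TRename \<alpha> t) = g_rename \<alpha> (eval \<rho> t)"
| "eval \<rho> (TPar t u) = g_par (eval \<rho> t) (eval \<rho> u)"

text \<open>Syntactic congruence of \<open>L\<close> in the algebra with universe \<open>U\<close> and signature
restricted to \<open>\<tau>\<close>: variable 0 plays the role of \<open>x\<close>, the other variables the \<open>y_i\<close>.\<close>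

definition syn_cong :: "('s::countable, 'a) sgraph set \<Rightarrow> 's set \<Rightarrow> ('s, 'a) sgraph set
    \<Rightarrow> ('s, 'a) sgraph \<Rightarrow> ('s, 'a) sgraph \<Rightarrow> bool" where
  "syn_cong U \<tau> L a b \<longleftrightarrow> a \<in> U \<and> b \<in> U \<and> gsort a = gsort b \<and>
     (\<forall>t \<rho>. trm_ok \<tau> t \<and> (\<forall>i. \<rho> i \<in> U) \<longrightarrow>
        (eval (\<rho>(0 := a)) t \<in> L \<longleftrightarrow> eval (\<rho>(0 := b)) t \<in> L))"

definition G_cong :: "('s::countable, 'a) sgraph set \<Rightarrow> ('s, 'a) sgraph \<Rightarrow> ('s, 'a) sgraph \<Rightarrow> bool" where
  "G_cong L = syn_cong {G. wf_graph G} UNIV L"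

definition Gtau_cong :: "'s::countable set \<Rightarrow> ('s, 'a) sgraph set \<Rightarrow> ('s, 'a) sgraph \<Rightarrow> ('s, 'a) sgraph \<Rightarrow> bool" where
  "Gtau_cong \<tau> L = syn_cong {G. wf_graph G \<and> gsort G \<subseteq> \<tau>} \<tau> L"

end

theory Submission
  imports Defs
begin

(*
  Write G|s for the restriction of G to the sort s, and call x and y equivalent if they have
  the same sort and, for every graph C, (x || C)|{} lies in L iff (y || C)|{} does.
  Equivalence is a congruence of G: restricting or renaming x can be moved into C, since once
  all sources are forgotten it only matters which sources of x are fused with sources of C;
  and parallel composition is associative and commutative up to isomorphism, which the
  isomorphism-closed L cannot detect. As (x || 0_{})|{} is isomorphic to x when x has empty
  sort, equivalent graphs lie in L together, so equivalence implies the syntactic congruence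
  in G. Conversely, if x has sort included in tau then (x || C)|{} = (x || C|tau)|{}, an instance
  of a term of G^tau, so the congruence in G^tau implies equivalence.
*)

lemma inj_on_dom_SomeD: "inj_on m (dom m) \<Longrightarrow> m x = Some v \<Longrightarrow> m y = Some v \<Longrightarrow> x = y"
  by (metis domI inj_onD)

lemma bij_betw_factor:
  assumes "\<And>p q. p \<in> S \<Longrightarrow> q \<in> S \<Longrightarrow> a p = a q \<longleftrightarrow> b p = b q"
  shows "p \<in> S \<Longrightarrow> (b \<circ> inv_into S a) (a p) = b p"
    and "bij_betw (b \<circ> inv_into S a) (a ` S) (b ` S)"
proof -
  show factor: "(b \<circ> inv_into S a) (a p) = b p" if "p \<in> S" for p
    using that assms[of "inv_into S a (a p)" p] by (simp add: inv_into_into f_inv_into_f)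
  show "bij_betw (b \<circ> inv_into S a) (a ` S) (b ` S)"
  proof (rule bij_betw_imageI)
    show "inj_on (b \<circ> inv_into S a) (a ` S)"
      by (rule inj_onI) (auto simp only: factor assms)
    show "(b \<circ> inv_into S a) ` a ` S = b ` S"
      using factor by (simp add: image_image)
  qed
qed

lemma UN_image_eq_image_Sigma: "(\<Union>k\<in>K. f k ` A k) = case_prod f ` Sigma K A"
  by (auto simp: image_iff)


section \<open>Well-formed graphs\<close>

lemma wf_graph_src_inj: "wf_graph G \<Longrightarrow> inj_on (src G) (dom (src G))"
  by (simp add: wf_graph_def)

lemma wf_graph_src_in_verts: "wf_graph G \<Longrightarrow> src G s = Some v \<Longrightarrow> v \<in> verts G"
  unfolding wf_graph_def by (meson ranI subsetD)

lemma wf_graph_att_in_verts: "wf_graph G \<Longrightarrow> e \<in> edges G \<Longrightarrow> set (att G e) \<subseteq> verts G"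
  unfolding wf_graph_def by blast

lemma wf_graph_zero: "finite \<sigma> \<Longrightarrow> wf_graph (g_zero \<sigma>)"
  by (auto simp: wf_graph_def g_zero_def inj_on_def ran_def dom_def split: if_splits)

lemma wf_graph_edge: "wf_graph (g_edge a ss)"
  by (auto simp: wf_graph_def g_edge_def inj_on_def ran_def dom_def split: if_splits)

lemma wf_graph_restrict: "wf_graph G \<Longrightarrow> wf_graph (g_restrict \<sigma> G)"
  unfolding wf_graph_def g_restrict_def
  by (auto dest!: ran_restrictD intro: ranI simp: inj_on_def)

lemma wf_graph_rename:
  assumes "bij \<beta>" and "wf_graph G"
  shows "wf_graph (g_rename \<beta> G)"
proof -
  have "inj (inv \<beta>)"
    using assms(1) by (simp add: bij_imp_bij_inv bij_is_inj)
  moreover have "dom (src G \<circ> inv \<beta>) = inv \<beta> -` dom (src G)"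
    by auto
  ultimately show ?thesis
    using assms(2) unfolding wf_graph_def g_rename_def
    by (auto simp: ran_def inj_on_def finite_vimageI dest: injD)
qed

lemma gsort_restrict: "gsort (g_restrict \<sigma> G) = gsort G \<inter> \<sigma>"
  unfolding gsort_def g_restrict_def by auto

lemma gsort_rename: "gsort (g_rename \<beta> G) = inv \<beta> -` gsort G"
  unfolding gsort_def g_rename_def by auto

lemma gsort_par: "gsort (g_par G H) = gsort G \<union> gsort H"
  unfolding gsort_def g_par_def dom_def by (auto split: option.splits)

lemma g_restrict_id:
  assumes "gsort G \<subseteq> \<sigma>"
  shows "g_restrict \<sigma> G = G"
proof -
  have "src G |` \<sigma> = src G"
    using assms unfolding gsort_def by (intro ext) (metis domIff restrict_in restrict_out subsetD)
  then show ?thesis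
    by (simp add: g_restrict_def)
qed

lemma graph_iso_restrict: "graph_iso G H \<Longrightarrow> graph_iso (g_restrict \<sigma> G) (g_restrict \<sigma> H)"
  unfolding graph_iso_def g_restrict_def by (auto simp: restrict_map_def)


section \<open>Parallel composition\<close>

lemma g_par_sel:
  "verts (g_par G H) = (\<lambda>v. 2 * v) ` verts G \<union> par_vmap G H ` verts H"
  "edges (g_par G H) = (\<lambda>e. 2 * e) ` edges G \<union> (\<lambda>e. 2 * e + 1) ` edges H"
  "lab (g_par G H) (2 * e) = lab G e"
  "lab (g_par G H) (Suc (2 * e)) = lab H e"
  "att (g_par G H) (2 * e) = map (\<lambda>v. 2 * v) (att G e)"
  "att (g_par G H) (Suc (2 * e)) = map (par_vmap G H) (att H e)"
  "src (g_par G H) s = (case src G s of Some v \<Rightarrow> Some (2 * v)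
     | None \<Rightarrow> map_option (par_vmap G H) (src H s))"
  by (simp_all add: g_par_def)

lemma par_vmap_cases:
  assumes "inj_on (src H) (dom (src H))"
  obtains (fused) s a where "src G s = Some a" "src H s = Some v" "par_vmap G H v = 2 * a"
    | (unfused) "\<And>s. src H s = Some v \<Longrightarrow> src G s = None" "par_vmap G H v = 2 * v + 1"
proof (cases "\<exists>s. s \<in> dom (src G) \<and> src H s = Some v")
  case True
  let ?s = "SOME s. s \<in> dom (src G) \<and> src H s = Some v"
  have "?s \<in> dom (src G)" "src H ?s = Some v"
    using someI_ex[OF True] by blast+
  then obtain a where "src G ?s = Some a" "src H ?s = Some v"
    by blast
  moreover from this True have "par_vmap G H v = 2 * a"
    by (simp add: par_vmap_def)
  ultimately show ?thesis
    by (rule fused)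
next
  case False
  then show ?thesis
    by (intro unfused) (auto simp: par_vmap_def)
qed

lemma par_vmap_fused:
  assumes "inj_on (src H) (dom (src H))" "src G s = Some a" "src H s = Some v"
  shows "par_vmap G H v = 2 * a"
  using assms(1)
proof (cases rule: par_vmap_cases[where G = G and v = v])
  case (fused s' a')
  then have "s' = s"
    using assms(1,3) by (blast dest: inj_on_dom_SomeD)
  then show ?thesis
    using fused assms(2) by simp
next
  case unfused
  then show ?thesis
    using assms(2,3) by simp
qed

lemma even_eq_par_vmap_iff:
  assumes "inj_on (src H) (dom (src H))"
  shows "2 * a = par_vmap G H v \<longleftrightarrow> (\<exists>s. src G s = Some a \<and> src H s = Some v)"
  using assms
proof (cases rule: par_vmap_cases[where G = G and v = v])
  case (fused s a')
  have "(\<exists>s'. src G s' = Some a \<and> src H s' = Some v) \<longleftrightarrow> a = a'"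
  proof
    assume "\<exists>s'. src G s' = Some a \<and> src H s' = Some v"
    then obtain s' where "src G s' = Some a" "src H s' = Some v"
      by blast
    moreover from this(2) have "s' = s"
      by (rule inj_on_dom_SomeD[OF assms _ fused(2)])
    ultimately show "a = a'"
      using fused(1) by simp
  qed (use fused in blast)
  then show ?thesis
    using fused(3) by simp
next
  case unfused
  have "2 * a \<noteq> 2 * v + 1"
    by presburger
  then show ?thesis
    using unfused by auto
qed

lemma par_vmap_inj:
  assumes "inj_on (src G) (dom (src G))" "inj_on (src H) (dom (src H))"
  shows "inj (par_vmap G H)"
proof (rule injI)
  fix v w
  assume eq: "par_vmap G H v = par_vmap G H w"
  show "v = w"
    using assms(2)
  proof (cases rule: par_vmap_cases[where G = G and v = v])
    case (fused s a)
    then obtain s' where "src G s' = Some a" "src H s' = Some w"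
      using eq even_eq_par_vmap_iff[OF assms(2)] by metis
    with fused have "s' = s"
      using assms(1) by (blast dest: inj_on_dom_SomeD)
    then show ?thesis
      using fused \<open>src H s' = Some w\<close> by simp
  next
    case unfused
    note v_unfused = this
    from assms(2) show ?thesis
    proof (cases rule: par_vmap_cases[where G = G and v = w])
      case (fused s a)
      then show ?thesis
        using eq v_unfused by presburger
    next
      case unfused
      then show ?thesis
        using eq v_unfused by simp
    qed
  qed
qed

lemma src_g_par_eq_Some_iff:
  assumes "inj_on (src H) (dom (src H))"
  shows "src (g_par G H) s = Some n \<longleftrightarrow>
    (\<exists>a. src G s = Some a \<and> n = 2 * a) \<or> (\<exists>b. src H s = Some b \<and> n = par_vmap G H b)"
  using par_vmap_fused[OF assms] by (auto simp: g_par_sel split: option.splits)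

lemma par_vmap_eqI:
  assumes "inj_on (src H) (dom (src H))" "inj_on (src H') (dom (src H'))"
    and "\<And>a v. (\<exists>s. src G s = Some a \<and> src H s = Some v) \<longleftrightarrow>
      (\<exists>s. src G' s = Some a \<and> src H' s = Some v)"
  shows "par_vmap G H = par_vmap G' H'"
proof
  fix v
  from assms(1) show "par_vmap G H v = par_vmap G' H' v"
  proof (cases rule: par_vmap_cases[where G = G and v = v])
    case (fused s a)
    then have "2 * a = par_vmap G' H' v"
      using assms(3) even_eq_par_vmap_iff[OF assms(2)] by blast
    then show ?thesis
      using fused(3) by simp
  next
    case unfused
    from assms(2) have "par_vmap G' H' v = 2 * v + 1"
    proof (cases rule: par_vmap_cases[where G = G' and v = v])
      case (fused s a)
      then show ?thesis
        using assms(3) unfused(1) by fastforce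
    qed
    then show ?thesis
      using unfused(2) by simp
  qed
qed

lemma forget_par_update_src:
  assumes "par_vmap (G\<lparr>src := m\<rparr>) H = par_vmap G (H\<lparr>src := m'\<rparr>)"
  shows "g_restrict {} (g_par (G\<lparr>src := m\<rparr>) H) = g_restrict {} (g_par G (H\<lparr>src := m'\<rparr>))"
  by (simp add: g_restrict_def g_par_def assms cong: if_cong)

lemma forget_par_restrict:
  assumes "wf_graph H"
  shows "g_restrict {} (g_par (g_restrict \<sigma> G) H) = g_restrict {} (g_par G (g_restrict \<sigma> H))"
proof -
  have "inj_on (src (g_restrict \<sigma> H)) (dom (src (g_restrict \<sigma> H)))"
    using assms by (simp add: wf_graph_src_inj wf_graph_restrict)
  then have "par_vmap (g_restrict \<sigma> G) H = par_vmap G (g_restrict \<sigma> H)"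
    by (rule par_vmap_eqI[OF wf_graph_src_inj[OF assms]])
      (auto simp: g_restrict_def restrict_map_def)
  then show ?thesis
    unfolding g_restrict_def[of \<sigma>] by (rule forget_par_update_src)
qed

lemma forget_par_rename:
  assumes "bij \<beta>" and "wf_graph H"
  shows "g_restrict {} (g_par (g_rename \<beta> G) H) = g_restrict {} (g_par G (g_rename (inv \<beta>) H))"
proof -
  have "(\<exists>s. src G (inv \<beta> s) = Some a \<and> src H s = Some v) \<longleftrightarrow>
      (\<exists>s. src G s = Some a \<and> src H (\<beta> s) = Some v)" for a v
  proof
    assume "\<exists>s. src G (inv \<beta> s) = Some a \<and> src H s = Some v"
    then obtain s where "src G (inv \<beta> s) = Some a" "src H s = Some v"
      by blast
    then show "\<exists>s. src G s = Some a \<and> src H (\<beta> s) = Some v"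
      using assms(1) by (intro exI[of _ "inv \<beta> s"]) (simp add: bij_is_surj surj_f_inv_f)
  next
    assume "\<exists>s. src G s = Some a \<and> src H (\<beta> s) = Some v"
    then obtain s where "src G s = Some a" "src H (\<beta> s) = Some v"
      by blast
    then show "\<exists>s. src G (inv \<beta> s) = Some a \<and> src H s = Some v"
      using assms(1) by (intro exI[of _ "\<beta> s"]) (simp add: bij_is_inj inv_f_f)
  qed
  moreover have "inj_on (src (g_rename (inv \<beta>) H)) (dom (src (g_rename (inv \<beta>) H)))"
    using assms by (simp add: wf_graph_src_inj wf_graph_rename bij_imp_bij_inv)
  ultimately have "par_vmap (g_rename \<beta> G) H = par_vmap G (g_rename (inv \<beta>) H)"
    using assms(1)
    by (intro par_vmap_eqI[OF wf_graph_src_inj[OF assms(2)]]) (simp_all add: g_rename_def inv_inv_eq)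
  then show ?thesis
    unfolding g_rename_def by (rule forget_par_update_src)
qed


section \<open>Gluing\<close>

(*
  G is glued from the components X k, k in K: it is the union of their images under the
  vertex and edge embeddings iv k and ie k, in which two vertices are identified exactly when
  they are sources with a common label.
*)
locale gluing =
  fixes G :: "('s, 'a) sgraph" and K :: "nat set" and X :: "nat \<Rightarrow> ('s, 'a) sgraph"
    and iv :: "nat \<Rightarrow> nat \<Rightarrow> nat" and ie :: "nat \<Rightarrow> nat \<Rightarrow> nat"
  assumes wf_component: "k \<in> K \<Longrightarrow> wf_graph (X k)"
    and verts_eq: "verts G = (\<Union>k\<in>K. iv k ` verts (X k))"
    and edges_eq: "edges G = (\<Union>k\<in>K. ie k ` edges (X k))"
    and lab_ie: "k \<in> K \<Longrightarrow> e \<in> edges (X k) \<Longrightarrow> lab G (ie k e) = lab (X k) e"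
    and att_ie: "k \<in> K \<Longrightarrow> e \<in> edges (X k) \<Longrightarrow> att G (ie k e) = map (iv k) (att (X k) e)"
    and ie_eq_iff: "k \<in> K \<Longrightarrow> l \<in> K \<Longrightarrow> e \<in> edges (X k) \<Longrightarrow> e' \<in> edges (X l) \<Longrightarrow>
      ie k e = ie l e' \<longleftrightarrow> k = l \<and> e = e'"
    and iv_eq_iff: "k \<in> K \<Longrightarrow> l \<in> K \<Longrightarrow> v \<in> verts (X k) \<Longrightarrow> w \<in> verts (X l) \<Longrightarrow>
      iv k v = iv l w \<longleftrightarrow> k = l \<and> v = w \<or> (\<exists>s. src (X k) s = Some v \<and> src (X l) s = Some w)"
    and src_eq_Some_iff: "src G s = Some n \<longleftrightarrow> (\<exists>k\<in>K. \<exists>v. src (X k) s = Some v \<and> n = iv k v)"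
begin

lemma src_component_in_verts: "k \<in> K \<Longrightarrow> src (X k) s = Some v \<Longrightarrow> v \<in> verts (X k)"
  by (rule wf_graph_src_in_verts[OF wf_component])

lemma src_eq_Some_iv_iff:
  assumes "k \<in> K" "v \<in> verts (X k)"
  shows "src G s = Some (iv k v) \<longleftrightarrow> src (X k) s = Some v"
proof
  assume "src G s = Some (iv k v)"
  then obtain l w where l: "l \<in> K" "src (X l) s = Some w" and "iv k v = iv l w"
    unfolding src_eq_Some_iff by blast
  moreover have "w \<in> verts (X l)"
    using l by (rule src_component_in_verts)
  ultimately have "k = l \<and> v = w \<or> (\<exists>s'. src (X k) s' = Some v \<and> src (X l) s' = Some w)"
    using iv_eq_iff[OF assms(1) l(1) assms(2)] by simp
  then show "src (X k) s = Some v"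
  proof (elim disjE exE conjE)
    fix s'
    assume "src (X k) s' = Some v" "src (X l) s' = Some w"
    moreover have "s' = s"
      using wf_graph_src_inj[OF wf_component[OF l(1)]] \<open>src (X l) s' = Some w\<close> l(2)
      by (rule inj_on_dom_SomeD)
    ultimately show ?thesis
      by simp
  qed (use l in simp)
next
  assume "src (X k) s = Some v"
  then show "src G s = Some (iv k v)"
    unfolding src_eq_Some_iff using assms(1) by blast
qed

lemma src_inj: "inj_on (src G) (dom (src G))"
proof (rule inj_onI)
  fix s s'
  assume "s \<in> dom (src G)" and eq: "src G s = src G s'"
  then obtain n where n: "src G s = Some n" "src G s' = Some n"
    by (metis domD)
  then obtain k v where kv: "k \<in> K" "src (X k) s = Some v" and "n = iv k v"
    unfolding src_eq_Some_iff by blast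
  moreover have "v \<in> verts (X k)"
    using kv by (rule src_component_in_verts)
  ultimately have "src (X k) s' = Some v"
    using n(2) src_eq_Some_iv_iff by simp
  with kv show "s = s'"
    using wf_graph_src_inj[OF wf_component[OF kv(1)]] by (blast dest: inj_on_dom_SomeD)
qed

lemma wf_graph:
  assumes "finite K"
  shows "wf_graph G"
  unfolding wf_graph_def
proof (intro conjI ballI src_inj)
  have fin: "finite (verts (X k))" "finite (edges (X k))" "finite (dom (src (X k)))" if "k \<in> K" for k
    using wf_component[OF that] by (simp_all add: wf_graph_def)
  show "finite (verts G)" "finite (edges G)"
    unfolding verts_eq edges_eq using assms fin by simp_all
  show "set (att G e) \<subseteq> verts G" if "e \<in> edges G" for e
  proof -
    from that obtain k e' where k: "k \<in> K" "e' \<in> edges (X k)" and "e = ie k e'"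
      unfolding edges_eq by blast
    then have "set (att G e) = iv k ` set (att (X k) e')"
      by (simp add: att_ie)
    also have "\<dots> \<subseteq> verts G"
      using wf_graph_att_in_verts[OF wf_component[OF k(1)] k(2)] k(1) unfolding verts_eq by blast
    finally show ?thesis .
  qed
  have "dom (src G) \<subseteq> (\<Union>k\<in>K. dom (src (X k)))"
  proof
    fix s
    assume "s \<in> dom (src G)"
    then obtain n where "src G s = Some n"
      by blast
    then obtain k v where "k \<in> K" "src (X k) s = Some v"
      unfolding src_eq_Some_iff by blast
    then show "s \<in> (\<Union>k\<in>K. dom (src (X k)))"
      by blast
  qed
  then show "finite (dom (src G))"
    by (rule finite_subset) (simp add: assms fin)
  show "ran (src G) \<subseteq> verts G"
  proof
    fix n
    assume "n \<in> ran (src G)"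
    then obtain s where "src G s = Some n"
      by (auto simp: ran_def)
    then obtain k v where "k \<in> K" "src (X k) s = Some v" "n = iv k v"
      unfolding src_eq_Some_iff by blast
    then show "n \<in> verts G"
      unfolding verts_eq using src_component_in_verts by blast
  qed
qed

end

lemma gluing_iso:
  assumes "gluing G K X iv ie" and "gluing H K X jv je"
  shows "graph_iso G H"
proof -
  interpret G: gluing G K X iv ie by fact
  interpret H: gluing H K X jv je by fact
  let ?V = "SIGMA k:K. verts (X k)" and ?E = "SIGMA k:K. edges (X k)"
  define f where "f = case_prod jv \<circ> inv_into ?V (case_prod iv)"
  define g where "g = case_prod je \<circ> inv_into ?E (case_prod ie)"
  have iv_jv: "case_prod iv p = case_prod iv q \<longleftrightarrow> case_prod jv p = case_prod jv q"
    if "p \<in> ?V" "q \<in> ?V" for p q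
    using that by (cases p; cases q) (simp add: G.iv_eq_iff H.iv_eq_iff)
  have ie_je: "case_prod ie p = case_prod ie q \<longleftrightarrow> case_prod je p = case_prod je q"
    if "p \<in> ?E" "q \<in> ?E" for p q
    using that by (cases p; cases q) (simp add: G.ie_eq_iff H.ie_eq_iff)
  have f_iv: "f (iv k v) = jv k v" if "k \<in> K" "v \<in> verts (X k)" for k v
    using bij_betw_factor(1)[where S = ?V and a = "case_prod iv" and b = "case_prod jv",
        OF iv_jv, where p = "(k, v)"] that
    by (simp add: f_def)
  have g_ie: "g (ie k e) = je k e" if "k \<in> K" "e \<in> edges (X k)" for k e
    using bij_betw_factor(1)[where S = ?E and a = "case_prod ie" and b = "case_prod je",
        OF ie_je, where p = "(k, e)"] that
    by (simp add: g_def)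
  have f_bij: "bij_betw f (verts G) (verts H)"
    unfolding G.verts_eq H.verts_eq UN_image_eq_image_Sigma f_def
    by (rule bij_betw_factor(2)[OF iv_jv])
  have g_bij: "bij_betw g (edges G) (edges H)"
    unfolding G.edges_eq H.edges_eq UN_image_eq_image_Sigma g_def
    by (rule bij_betw_factor(2)[OF ie_je])
  have edge: "lab H (g e) = lab G e \<and> att H (g e) = map f (att G e)" if "e \<in> edges G" for e
  proof -
    from that obtain k e' where k: "k \<in> K" "e' \<in> edges (X k)" and e: "e = ie k e'"
      by (auto simp: G.edges_eq)
    have "map f (map (iv k) (att (X k) e')) = map (jv k) (att (X k) e')"
      using f_iv[OF k(1)] wf_graph_att_in_verts[OF G.wf_component[OF k(1)] k(2)] by auto
    then show ?thesis
      using k by (simp add: e g_ie G.lab_ie H.lab_ie G.att_ie H.att_ie)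
  qed
  have src: "src H s = map_option f (src G s)" for s
  proof (cases "src G s")
    case None
    have "src H s = None"
    proof (rule ccontr)
      assume "src H s \<noteq> None"
      then obtain k v where "k \<in> K" "src (X k) s = Some v"
        using H.src_eq_Some_iff by blast
      then have "src G s = Some (iv k v)"
        unfolding G.src_eq_Some_iff by blast
      with None show False
        by simp
    qed
    then show ?thesis
      using None by simp
  next
    case (Some n)
    then obtain k v where "k \<in> K" "src (X k) s = Some v" "n = iv k v"
      using G.src_eq_Some_iff by blast
    then show ?thesis
      using Some H.src_eq_Some_iff f_iv G.src_component_in_verts by auto
  qed
  show ?thesis
    unfolding graph_iso_def using f_bij g_bij edge src by blast
qed

locale gluing_pair = G: gluing G K1 X iv1 ie1 + H: gluing H K2 X iv2 ie2
  for G H :: "('s, 'a) sgraph" and K1 K2 X iv1 ie1 iv2 ie2 +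
  assumes disjoint: "K1 \<inter> K2 = {}"
begin

definition par_iv :: "nat \<Rightarrow> nat \<Rightarrow> nat" where
  "par_iv k v = (if k \<in> K1 then 2 * iv1 k v else par_vmap G H (iv2 k v))"

definition par_ie :: "nat \<Rightarrow> nat \<Rightarrow> nat" where
  "par_ie k e = (if k \<in> K1 then 2 * ie1 k e else 2 * ie2 k e + 1)"

lemma not_in_K1: "k \<in> K2 \<Longrightarrow> k \<notin> K1"
  using disjoint by blast

lemma par_iv_K1: "k \<in> K1 \<Longrightarrow> par_iv k v = 2 * iv1 k v"
  and par_iv_K2: "k \<in> K2 \<Longrightarrow> par_iv k v = par_vmap G H (iv2 k v)"
  by (simp_all add: par_iv_def not_in_K1)

lemma verts_par: "verts (g_par G H) = (\<Union>k\<in>K1 \<union> K2. par_iv k ` verts (X k))"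
proof -
  have "(\<lambda>v. 2 * v) ` verts G = (\<Union>k\<in>K1. par_iv k ` verts (X k))"
    unfolding G.verts_eq image_UN by (rule SUP_cong) (simp_all add: par_iv_def image_image)
  moreover have "par_vmap G H ` verts H = (\<Union>k\<in>K2. par_iv k ` verts (X k))"
    unfolding H.verts_eq image_UN by (rule SUP_cong) (simp_all add: par_iv_def not_in_K1 image_image)
  ultimately show ?thesis
    by (simp add: g_par_sel UN_Un)
qed

lemma edges_par: "edges (g_par G H) = (\<Union>k\<in>K1 \<union> K2. par_ie k ` edges (X k))"
proof -
  have "(\<lambda>e. 2 * e) ` edges G = (\<Union>k\<in>K1. par_ie k ` edges (X k))"
    unfolding G.edges_eq image_UN by (rule SUP_cong) (simp_all add: par_ie_def image_image)
  moreover have "(\<lambda>e. 2 * e + 1) ` edges H = (\<Union>k\<in>K2. par_ie k ` edges (X k))"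
    unfolding H.edges_eq image_UN by (rule SUP_cong) (simp_all add: par_ie_def not_in_K1 image_image)
  ultimately show ?thesis
    by (simp add: g_par_sel UN_Un)
qed

lemma lab_att_par_ie:
  assumes "k \<in> K1 \<union> K2" "e \<in> edges (X k)"
  shows "lab (g_par G H) (par_ie k e) = lab (X k) e"
    and "att (g_par G H) (par_ie k e) = map (par_iv k) (att (X k) e)"
  using assms G.lab_ie G.att_ie H.lab_ie H.att_ie
  by (auto simp: par_ie_def par_iv_def g_par_sel not_in_K1 cong: map_cong)

lemma par_ie_eq_iff:
  assumes "k \<in> K1 \<union> K2" "l \<in> K1 \<union> K2" "e \<in> edges (X k)" "e' \<in> edges (X l)"
  shows "par_ie k e = par_ie l e' \<longleftrightarrow> k = l \<and> e = e'"
proof -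
  have "2 * a \<noteq> Suc (2 * b)" "Suc (2 * b) \<noteq> 2 * a" for a b :: nat
    by presburger+
  then show ?thesis
    using assms G.ie_eq_iff H.ie_eq_iff not_in_K1 by (auto simp: par_ie_def)
qed

lemma par_iv_eq_iff:
  assumes "k \<in> K1 \<union> K2" "l \<in> K1 \<union> K2" "v \<in> verts (X k)" "w \<in> verts (X l)"
  shows "par_iv k v = par_iv l w \<longleftrightarrow>
    k = l \<and> v = w \<or> (\<exists>s. src (X k) s = Some v \<and> src (X l) s = Some w)"
proof -
  have mixed: "2 * iv1 k v = par_vmap G H (iv2 l w) \<longleftrightarrow>
      (\<exists>s. src (X k) s = Some v \<and> src (X l) s = Some w)"
    if "k \<in> K1" "l \<in> K2" "v \<in> verts (X k)" "w \<in> verts (X l)" for k l v w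
    by (simp only: even_eq_par_vmap_iff[OF H.src_inj] G.src_eq_Some_iv_iff[OF that(1,3)]
        H.src_eq_Some_iv_iff[OF that(2,4)])
  have inj: "inj (par_vmap G H)"
    by (rule par_vmap_inj[OF G.src_inj H.src_inj])
  consider "k \<in> K1" "l \<in> K1" | "k \<in> K1" "l \<in> K2" | "k \<in> K2" "l \<in> K1" | "k \<in> K2" "l \<in> K2"
    using assms(1,2) by blast
  then show ?thesis
  proof cases
    case 1
    then show ?thesis
      using G.iv_eq_iff[OF 1 assms(3,4)] by (simp add: par_iv_def)
  next
    case 2
    then show ?thesis
      using mixed[OF 2 assms(3,4)] not_in_K1 by (auto simp: par_iv_def)
  next
    case 3
    then show ?thesis
      using mixed[OF 3(2,1) assms(4,3)] not_in_K1 by (auto simp: par_iv_def)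
  next
    case 4
    then show ?thesis
      using H.iv_eq_iff[OF 4 assms(3,4)] not_in_K1 by (simp add: par_iv_def inj_eq[OF inj])
  qed
qed

lemma src_par_eq_Some_iff:
  "src (g_par G H) s = Some n \<longleftrightarrow> (\<exists>k\<in>K1 \<union> K2. \<exists>v. src (X k) s = Some v \<and> n = par_iv k v)"
  unfolding src_g_par_eq_Some_iff[OF H.src_inj] G.src_eq_Some_iff H.src_eq_Some_iff bex_Un
  by (auto simp: par_iv_K1 par_iv_K2) blast

lemma gluing_par: "gluing (g_par G H) (K1 \<union> K2) X par_iv par_ie"
  by unfold_locales
    (use G.wf_component H.wf_component in
      \<open>auto simp: verts_par edges_par lab_att_par_ie par_ie_eq_iff par_iv_eq_iff src_par_eq_Some_iff\<close>)

end

definition glued :: "('s, 'a) sgraph \<Rightarrow> nat set \<Rightarrow> (nat \<Rightarrow> ('s, 'a) sgraph) \<Rightarrow> bool" where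
  "glued G K X \<longleftrightarrow> (\<exists>iv ie. gluing G K X iv ie)"

lemma glued_single: "X k = G \<Longrightarrow> wf_graph G \<Longrightarrow> glued G {k} X"
  unfolding glued_def
  by (rule exI[of _ "\<lambda>_ v. v"], rule exI[of _ "\<lambda>_ e. e"], unfold_locales)
    (auto dest: inj_on_dom_SomeD[OF wf_graph_src_inj])

lemma glued_empty: "glued (g_zero {}) {} X"
  unfolding glued_def
  by (rule exI[of _ "\<lambda>_ v. v"], rule exI[of _ "\<lambda>_ e. e"], unfold_locales)
    (simp_all add: g_zero_def)

lemma glued_par:
  assumes "glued G K1 X" "glued H K2 X" "K1 \<inter> K2 = {}"
  shows "glued (g_par G H) (K1 \<union> K2) X"
proof -
  obtain iv1 ie1 iv2 ie2 where "gluing G K1 X iv1 ie1" "gluing H K2 X iv2 ie2"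
    using assms(1,2) unfolding glued_def by blast
  then have "gluing_pair G H K1 K2 X iv1 ie1 iv2 ie2"
    using assms(3) by (simp add: gluing_pair_def gluing_pair_axioms_def)
  then show ?thesis
    unfolding glued_def by (blast intro: gluing_pair.gluing_par)
qed

lemma glued_iso: "glued G K X \<Longrightarrow> glued H K X \<Longrightarrow> graph_iso G H"
  unfolding glued_def by (blast intro: gluing_iso)

lemma glued_wf_graph: "glued G K X \<Longrightarrow> finite K \<Longrightarrow> wf_graph G"
  unfolding glued_def by (blast intro: gluing.wf_graph)

lemma wf_graph_par:
  assumes "wf_graph G" "wf_graph H"
  shows "wf_graph (g_par G H)"
proof -
  define X where "X = (!) [G, H]"
  have "glued G {0} X" "glued H {1} X"
    using assms by (simp_all add: glued_single X_def)
  then have "glued (g_par G H) ({0} \<union> {1}) X"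
    by (rule glued_par) simp
  then show ?thesis
    by (rule glued_wf_graph) simp
qed

lemma glued_restrict_mem_iff:
  assumes "iso_closed L" "glued G K X" "glued H K X"
  shows "g_restrict \<sigma> G \<in> L \<longleftrightarrow> g_restrict \<sigma> H \<in> L"
  using assms graph_iso_restrict glued_iso unfolding iso_closed_def by metis

lemma par_assoc_mem_iff:
  assumes "iso_closed L" "wf_graph A" "wf_graph B" "wf_graph C"
  shows "g_restrict \<sigma> (g_par (g_par A B) C) \<in> L \<longleftrightarrow> g_restrict \<sigma> (g_par A (g_par B C)) \<in> L"
    and "g_restrict \<sigma> (g_par (g_par B A) C) \<in> L \<longleftrightarrow> g_restrict \<sigma> (g_par A (g_par B C)) \<in> L"
proof -
  define X where "X = (!) [A, B, C]"
  have A: "glued A {0} X" and B: "glued B {1} X" and C: "glued C {2} X"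
    using assms(2-4) by (simp_all add: glued_single X_def)
  have ABC: "glued (g_par (g_par A B) C) ({0} \<union> {1} \<union> {2}) X"
    by (rule glued_par[OF glued_par[OF A B] C]) auto
  have "glued (g_par A (g_par B C)) ({0} \<union> ({1} \<union> {2})) X"
    by (rule glued_par[OF A glued_par[OF B C]]) auto
  then have A_BC: "glued (g_par A (g_par B C)) ({0} \<union> {1} \<union> {2}) X"
    by (simp only: Un_assoc)
  have "glued (g_par (g_par B A) C) ({1} \<union> {0} \<union> {2}) X"
    by (rule glued_par[OF glued_par[OF B A] C]) auto
  then have BAC: "glued (g_par (g_par B A) C) ({0} \<union> {1} \<union> {2}) X"
    by (simp only: Un_commute[of "{1}"])
  show "g_restrict \<sigma> (g_par (g_par A B) C) \<in> L \<longleftrightarrow> g_restrict \<sigma> (g_par A (g_par B C)) \<in> L"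
    using glued_restrict_mem_iff[OF assms(1) ABC A_BC] .
  show "g_restrict \<sigma> (g_par (g_par B A) C) \<in> L \<longleftrightarrow> g_restrict \<sigma> (g_par A (g_par B C)) \<in> L"
    using glued_restrict_mem_iff[OF assms(1) BAC A_BC] .
qed

lemma forget_par_zero_mem_iff:
  assumes "iso_closed L" "wf_graph A" "gsort A = {}"
  shows "g_restrict {} (g_par A (g_zero {})) \<in> L \<longleftrightarrow> A \<in> L"
proof -
  have "glued A {0} (\<lambda>_. A)"
    using assms(2) by (simp add: glued_single)
  moreover from this have "glued (g_par A (g_zero {})) {0} (\<lambda>_. A)"
    using glued_par[OF _ glued_empty] by fastforce
  moreover have "g_restrict {} A = A"
    using assms(3) by (simp add: g_restrict_id)
  ultimately show ?thesis
    using glued_restrict_mem_iff[OF assms(1)] by metis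
qed


section \<open>Equivalence under parallel contexts\<close>

definition par_ctx_equiv :: "('s, 'a) sgraph set \<Rightarrow> ('s, 'a) sgraph \<Rightarrow> ('s, 'a) sgraph \<Rightarrow> bool" where
  "par_ctx_equiv L G H \<longleftrightarrow> wf_graph G \<and> wf_graph H \<and> gsort G = gsort H \<and>
     (\<forall>C. wf_graph C \<longrightarrow> (g_restrict {} (g_par G C) \<in> L \<longleftrightarrow> g_restrict {} (g_par H C) \<in> L))"

lemma par_ctx_equivI:
  assumes "wf_graph G" "wf_graph H" "gsort G = gsort H"
    and "\<And>C. wf_graph C \<Longrightarrow> g_restrict {} (g_par G C) \<in> L \<longleftrightarrow> g_restrict {} (g_par H C) \<in> L"
  shows "par_ctx_equiv L G H"
  using assms by (simp add: par_ctx_equiv_def)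

lemma par_ctx_equivD:
  assumes "par_ctx_equiv L G H"
  shows "wf_graph G" "wf_graph H" "gsort G = gsort H"
    and "wf_graph C \<Longrightarrow> g_restrict {} (g_par G C) \<in> L \<longleftrightarrow> g_restrict {} (g_par H C) \<in> L"
  using assms by (simp_all add: par_ctx_equiv_def)

lemma par_ctx_equiv_refl: "wf_graph G \<Longrightarrow> par_ctx_equiv L G G"
  by (simp add: par_ctx_equiv_def)

lemma par_ctx_equiv_trans: "par_ctx_equiv L G H \<Longrightarrow> par_ctx_equiv L H K \<Longrightarrow> par_ctx_equiv L G K"
  unfolding par_ctx_equiv_def by blast

lemma par_ctx_equiv_restrict:
  assumes "par_ctx_equiv L G H"
  shows "par_ctx_equiv L (g_restrict \<sigma> G) (g_restrict \<sigma> H)"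
proof (rule par_ctx_equivI)
  show "wf_graph (g_restrict \<sigma> G)" "wf_graph (g_restrict \<sigma> H)"
    "gsort (g_restrict \<sigma> G) = gsort (g_restrict \<sigma> H)"
    using par_ctx_equivD(1-3)[OF assms] by (simp_all add: wf_graph_restrict gsort_restrict)
  show "g_restrict {} (g_par (g_restrict \<sigma> G) C) \<in> L \<longleftrightarrow>
      g_restrict {} (g_par (g_restrict \<sigma> H) C) \<in> L" if "wf_graph C" for C
    unfolding forget_par_restrict[OF that]
    by (rule par_ctx_equivD(4)[OF assms wf_graph_restrict[OF that]])
qed

lemma par_ctx_equiv_rename:
  assumes "par_ctx_equiv L G H" "bij \<beta>"
  shows "par_ctx_equiv L (g_rename \<beta> G) (g_rename \<beta> H)"
proof (rule par_ctx_equivI)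
  show "wf_graph (g_rename \<beta> G)" "wf_graph (g_rename \<beta> H)"
    "gsort (g_rename \<beta> G) = gsort (g_rename \<beta> H)"
    using par_ctx_equivD(1-3)[OF assms(1)] assms(2) by (simp_all add: wf_graph_rename gsort_rename)
  show "g_restrict {} (g_par (g_rename \<beta> G) C) \<in> L \<longleftrightarrow>
      g_restrict {} (g_par (g_rename \<beta> H) C) \<in> L" if "wf_graph C" for C
    unfolding forget_par_rename[OF assms(2) that]
    by (rule par_ctx_equivD(4)[OF assms(1) wf_graph_rename[OF bij_imp_bij_inv[OF assms(2)] that]])
qed

lemma par_ctx_equiv_par:
  assumes "iso_closed L" "par_ctx_equiv L G G'" "par_ctx_equiv L H H'"
  shows "par_ctx_equiv L (g_par G H) (g_par G' H')"
proof -
  note G = par_ctx_equivD[OF assms(2)] and H = par_ctx_equivD[OF assms(3)]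
  have "par_ctx_equiv L (g_par G H) (g_par G' H)"
  proof (rule par_ctx_equivI)
    show "wf_graph (g_par G H)" "wf_graph (g_par G' H)" "gsort (g_par G H) = gsort (g_par G' H)"
      using G(1-3) H(1) by (simp_all add: wf_graph_par gsort_par)
    fix C :: "('a, 'b) sgraph"
    assume C: "wf_graph C"
    have "g_restrict {} (g_par (g_par G H) C) \<in> L \<longleftrightarrow> g_restrict {} (g_par G (g_par H C)) \<in> L"
      by (rule par_assoc_mem_iff(1)[OF assms(1) G(1) H(1) C])
    also have "\<dots> \<longleftrightarrow> g_restrict {} (g_par G' (g_par H C)) \<in> L"
      by (rule G(4)[OF wf_graph_par[OF H(1) C]])
    also have "\<dots> \<longleftrightarrow> g_restrict {} (g_par (g_par G' H) C) \<in> L"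
      by (rule par_assoc_mem_iff(1)[OF assms(1) G(2) H(1) C, symmetric])
    finally show "g_restrict {} (g_par (g_par G H) C) \<in> L \<longleftrightarrow>
      g_restrict {} (g_par (g_par G' H) C) \<in> L" .
  qed
  moreover have "par_ctx_equiv L (g_par G' H) (g_par G' H')"
  proof (rule par_ctx_equivI)
    show "wf_graph (g_par G' H)" "wf_graph (g_par G' H')" "gsort (g_par G' H) = gsort (g_par G' H')"
      using G(2) H(1-3) by (simp_all add: wf_graph_par gsort_par)
    fix C :: "('a, 'b) sgraph"
    assume C: "wf_graph C"
    have "g_restrict {} (g_par (g_par G' H) C) \<in> L \<longleftrightarrow> g_restrict {} (g_par H (g_par G' C)) \<in> L"
      by (rule par_assoc_mem_iff(2)[OF assms(1) H(1) G(2) C])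
    also have "\<dots> \<longleftrightarrow> g_restrict {} (g_par H' (g_par G' C)) \<in> L"
      by (rule H(4)[OF wf_graph_par[OF G(2) C]])
    also have "\<dots> \<longleftrightarrow> g_restrict {} (g_par (g_par G' H') C) \<in> L"
      by (rule par_assoc_mem_iff(2)[OF assms(1) H(2) G(2) C, symmetric])
    finally show "g_restrict {} (g_par (g_par G' H) C) \<in> L \<longleftrightarrow>
      g_restrict {} (g_par (g_par G' H') C) \<in> L" .
  qed
  ultimately show ?thesis
    by (rule par_ctx_equiv_trans)
qed

lemma par_ctx_equiv_eval:
  assumes "iso_closed L" "par_ctx_equiv L G H" "\<And>i. wf_graph (\<rho> i)" "trm_ok UNIV t"
  shows "par_ctx_equiv L (eval (\<rho>(0 := G)) t) (eval (\<rho>(0 := H)) t)"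
  using assms(4)
proof (induction t)
  case (TVar i)
  then show ?case
    using assms(2,3) by (simp add: par_ctx_equiv_refl)
next
  case (TZero \<sigma>)
  then show ?case
    by (simp add: par_ctx_equiv_refl wf_graph_zero)
next
  case (TEdge a ss)
  then show ?case
    by (simp add: par_ctx_equiv_refl wf_graph_edge)
next
  case (TRestrict \<sigma> t)
  then show ?case
    by (simp add: par_ctx_equiv_restrict)
next
  case (TRename \<beta> t)
  then show ?case
    by (simp add: par_ctx_equiv_rename finite_perm_def)
next
  case (TPar t u)
  then show ?case
    by (simp add: par_ctx_equiv_par[OF assms(1)])
qed

lemma par_ctx_equiv_mem_iff:
  fixes L :: "('s::countable, 'a) sgraph set"
  assumes "iso_closed L" "L \<subseteq> {G. wf_graph G \<and> gsort G = {}}" "par_ctx_equiv L G H"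
  shows "G \<in> L \<longleftrightarrow> H \<in> L"
proof (cases "gsort G = {}")
  case True
  note G = par_ctx_equivD[OF assms(3)]
  have "G \<in> L \<longleftrightarrow> g_restrict {} (g_par G (g_zero {})) \<in> L"
    using forget_par_zero_mem_iff[OF assms(1) G(1) True] by simp
  also have "\<dots> \<longleftrightarrow> g_restrict {} (g_par H (g_zero {})) \<in> L"
    by (rule G(4)) (simp add: wf_graph_zero)
  also have "\<dots> \<longleftrightarrow> H \<in> L"
    using forget_par_zero_mem_iff[OF assms(1) G(2)] G(3) True by simp
  finally show ?thesis .
next
  case False
  then show ?thesis
    using assms(2) par_ctx_equivD(3)[OF assms(3)] by auto
qed

lemma trm_ok_mono: "trm_ok \<tau> t \<Longrightarrow> \<tau> \<subseteq> \<tau>' \<Longrightarrow> trm_ok \<tau>' t"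
  by (induction t) auto

lemma G_cong_imp_Gtau_cong:
  fixes L :: "('s::countable, 'a) sgraph set"
  assumes "G_cong L G1 G2" "gsort G1 \<subseteq> \<tau>" "gsort G2 \<subseteq> \<tau>"
  shows "Gtau_cong \<tau> L G1 G2"
proof -
  have "wf_graph G1" "wf_graph G2" "gsort G1 = gsort G2"
    and cong: "\<And>t \<rho>. trm_ok UNIV t \<Longrightarrow> (\<forall>i. wf_graph (\<rho> i)) \<Longrightarrow>
      eval (\<rho>(0 := G1)) t \<in> L \<longleftrightarrow> eval (\<rho>(0 := G2)) t \<in> L"
    using assms(1) unfolding G_cong_def syn_cong_def by auto
  then show ?thesis
    unfolding Gtau_cong_def syn_cong_def
  proof (intro conjI allI impI)
    fix t :: "('s, 'a) trm" and \<rho> :: "nat \<Rightarrow> ('s, 'a) sgraph"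
    assume "trm_ok \<tau> t \<and> (\<forall>i. \<rho> i \<in> {G. wf_graph G \<and> gsort G \<subseteq> \<tau>})"
    then show "eval (\<rho>(0 := G1)) t \<in> L \<longleftrightarrow> eval (\<rho>(0 := G2)) t \<in> L"
      by (intro cong) (auto intro: trm_ok_mono)
  qed (use assms(2,3) in simp_all)
qed

lemma Gtau_cong_imp_par_ctx_equiv:
  fixes L :: "('s::countable, 'a) sgraph set"
  assumes "Gtau_cong \<tau> L G1 G2"
  shows "par_ctx_equiv L G1 G2"
proof -
  have G: "wf_graph G1" "wf_graph G2" "gsort G1 = gsort G2" "gsort G1 \<subseteq> \<tau>" "gsort G2 \<subseteq> \<tau>"
    and cong: "\<And>t \<rho>. trm_ok \<tau> t \<Longrightarrow> (\<forall>i. wf_graph (\<rho> i) \<and> gsort (\<rho> i) \<subseteq> \<tau>) \<Longrightarrow>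
      eval (\<rho>(0 := G1)) t \<in> L \<longleftrightarrow> eval (\<rho>(0 := G2)) t \<in> L"
    using assms unfolding Gtau_cong_def syn_cong_def by auto
  show ?thesis
  proof (rule par_ctx_equivI[OF G(1-3)])
    fix C :: "('s, 'a) sgraph"
    assume C: "wf_graph C"
    define \<rho> where "\<rho> = (\<lambda>i::nat. if i = 1 then g_restrict \<tau> C else G1)"
    have "\<forall>i. wf_graph (\<rho> i) \<and> gsort (\<rho> i) \<subseteq> \<tau>"
      using G C by (simp add: \<rho>_def wf_graph_restrict gsort_restrict)
    then have "eval (\<rho>(0 := G1)) (TRestrict {} (TPar (TVar 0) (TVar 1))) \<in> L \<longleftrightarrow>
        eval (\<rho>(0 := G2)) (TRestrict {} (TPar (TVar 0) (TVar 1))) \<in> L"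
      by (intro cong) simp
    then have "g_restrict {} (g_par G1 (g_restrict \<tau> C)) \<in> L \<longleftrightarrow>
        g_restrict {} (g_par G2 (g_restrict \<tau> C)) \<in> L"
      by (simp add: \<rho>_def)
    then show "g_restrict {} (g_par G1 C) \<in> L \<longleftrightarrow> g_restrict {} (g_par G2 C) \<in> L"
      unfolding forget_par_restrict[OF C, symmetric] g_restrict_id[OF G(4)] g_restrict_id[OF G(5)] .
  qed
qed

lemma par_ctx_equiv_imp_G_cong:
  fixes L :: "('s::countable, 'a) sgraph set"
  assumes "iso_closed L" "L \<subseteq> {G. wf_graph G \<and> gsort G = {}}" "par_ctx_equiv L G1 G2"
  shows "G_cong L G1 G2"
  unfolding G_cong_def syn_cong_def
proof (intro conjI allI impI)
  show "G1 \<in> {G. wf_graph G}" "G2 \<in> {G. wf_graph G}" "gsort G1 = gsort G2"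
    using par_ctx_equivD(1-3)[OF assms(3)] by simp_all
  fix t :: "('s, 'a) trm" and \<rho> :: "nat \<Rightarrow> ('s, 'a) sgraph"
  assume "trm_ok UNIV t \<and> (\<forall>i. \<rho> i \<in> {G. wf_graph G})"
  then have "par_ctx_equiv L (eval (\<rho>(0 := G1)) t) (eval (\<rho>(0 := G2)) t)"
    by (intro par_ctx_equiv_eval[OF assms(1,3)]) simp_all
  then show "eval (\<rho>(0 := G1)) t \<in> L \<longleftrightarrow> eval (\<rho>(0 := G2)) t \<in> L"
    by (rule par_ctx_equiv_mem_iff[OF assms(1,2)])
qed

theorem lemma7p3:
  fixes L :: "('s::countable, 'a) sgraph set" and \<tau> :: "'s set"
    and G1 G2 :: "('s, 'a) sgraph"
  assumes "infinite (UNIV :: 's set)"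
    and "L \<subseteq> {G. wf_graph G \<and> gsort G = {}}" and "iso_closed L"
    and "finite \<tau>"
    and "wf_graph G1" and "wf_graph G2" and "gsort G1 \<subseteq> \<tau>" and "gsort G2 \<subseteq> \<tau>"
  shows "G_cong L G1 G2 \<longleftrightarrow> Gtau_cong \<tau> L G1 G2"
proof
  assume "G_cong L G1 G2"
  then show "Gtau_cong \<tau> L G1 G2"
    using assms(7,8) by (rule G_cong_imp_Gtau_cong)
next
  assume "Gtau_cong \<tau> L G1 G2"
  then have "par_ctx_equiv L G1 G2"
    by (rule Gtau_cong_imp_par_ctx_equiv)
  then show "G_cong L G1 G2"
    using assms(3,2) by (intro par_ctx_equiv_imp_G_cong)
qed

end
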